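(* Let $x_1\in\mathbb R$ with $|x_1|\le1$. For any $\alpha\in(0,1]$ and any $0\le\beta<\alpha/2$, $$I_{\alpha,\beta}:=\iiint_{u_1^2+u_2^2+v_2^2<1}\frac{|u_1-x_1|^{-1+\alpha}}{\big(u_1^2+u_2^2+v_2^2\big)^{1+\beta}}\,du_1\,du_2\,dv_2\le A_{\alpha,\beta}<\infty,$$ where the constant $A_{\alpha,\beta}$ is independent of $x_1$. *)

theory Defs
  imports "HOL-Analysis.Analysis"
begin

end

(*
  With r^2 = u1^2 + u2^2 + v2^2, split the exponent as 1 + \<beta> = q/2 + p, where q = \<alpha>/2 + \<beta>.
  Since r dominates every coordinate, r^(-2(1+\<beta>)) <= |u1|^(-q) |u2|^(-p) |v2|^(-p); comparing
  |u1 - x1| with |u1| then gives |u1 - x1|^(\<alpha>-1) |u1|^(-q) <= |u1 - x1|^(-\<gamma>) + |u1|^(-\<gamma>) for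
  \<gamma> = 1 - \<alpha> + q. Thus on the ball the integrand is dominated by a product of one-variable
  functions on the cube [-1,1]^3, and by Tonelli the integral is at most a product of integrals
  of |t|^(-\<gamma>) and |t|^(-p) over intervals of length at most 4. The hypothesis \<beta> < \<alpha>/2 is
  exactly what makes \<gamma> < 1 and p < 1, so these integrals are finite, and they do not depend on x1.
*)
theory Submission
  imports Defs
begin

lemma powr_neg_le_of_square_le:
  fixes x r s :: real
  assumes "0 < x" "x\<^sup>2 \<le> r" "0 \<le> s"
  shows "r powr (-(s/2)) \<le> x powr -s"
proof -
  have "r powr (-(s/2)) \<le> (x\<^sup>2) powr (-(s/2))"
    using assms by (intro powr_mono2') auto
  also have "\<dots> = (x powr 2) powr (-(s/2))"
    using assms(1) by (simp add: powr_numeral)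
  also have "\<dots> = x powr -s"
    by (simp add: powr_powr)
  finally show ?thesis .
qed

lemma powr_neg_mult_le_powr_neg_add:
  fixes a b s t :: real
  assumes "0 < a" "0 < b" "0 \<le> s" "0 \<le> t"
  shows "a powr -s * b powr -t \<le> a powr -(s + t) + b powr -(s + t)"
proof (cases "a \<le> b")
  case True
  have "a powr -s * b powr -t \<le> a powr -s * a powr -t"
    using assms True by (intro mult_left_mono powr_mono2') auto
  also have "\<dots> = a powr -(s + t)" by (simp add: powr_add[symmetric])
  finally show ?thesis by (smt (verit) powr_ge_zero)
next
  case False
  have "a powr -s * b powr -t \<le> b powr -s * b powr -t"
    using assms False by (intro mult_right_mono powr_mono2') auto
  also have "\<dots> = b powr -(s + t)" by (simp add: powr_add[symmetric])
  finally show ?thesis by (smt (verit) powr_ge_zero)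
qed

lemma powr_neg_div_sum_squares_le:
  fixes a b c x s q p :: real
  assumes "a \<noteq> x" "a \<noteq> 0" "b \<noteq> 0" "c \<noteq> 0" "0 \<le> s" "0 \<le> q" "0 \<le> p"
  shows "\<bar>a - x\<bar> powr -s / (a\<^sup>2 + b\<^sup>2 + c\<^sup>2) powr (q/2 + p)
    \<le> (\<bar>a - x\<bar> powr -(s + q) + \<bar>a\<bar> powr -(s + q))
      * \<bar>b\<bar> powr -p * \<bar>c\<bar> powr -p"
proof -
  define r where "r = a\<^sup>2 + b\<^sup>2 + c\<^sup>2"
  have r_a: "r powr (-(q/2)) \<le> \<bar>a\<bar> powr -q"
    by (rule powr_neg_le_of_square_le) (use assms in \<open>auto simp: r_def\<close>)
  have r_b: "r powr (-(p/2)) \<le> \<bar>b\<bar> powr -p"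
    by (rule powr_neg_le_of_square_le) (use assms in \<open>auto simp: r_def\<close>)
  have r_c: "r powr (-(p/2)) \<le> \<bar>c\<bar> powr -p"
    by (rule powr_neg_le_of_square_le) (use assms in \<open>auto simp: r_def\<close>)
  have "\<bar>a - x\<bar> powr -s / r powr (q/2 + p)
      = \<bar>a - x\<bar> powr -s * r powr (-(q/2)) * r powr (-(p/2)) * r powr (-(p/2))"
  proof -
    have "r powr (-(q/2 + p)) = r powr (-(q/2) + -(p/2) + -(p/2))"
      by (simp add: algebra_simps)
    also have "\<dots> = r powr (-(q/2)) * r powr (-(p/2)) * r powr (-(p/2))"
      by (simp only: powr_add)
    finally have "r powr (-(q/2 + p)) = r powr (-(q/2)) * r powr (-(p/2)) * r powr (-(p/2))" .
    moreover have "\<bar>a - x\<bar> powr -s / r powr (q/2 + p)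
        = \<bar>a - x\<bar> powr -s * r powr (-(q/2 + p))"
      unfolding powr_minus_divide[of r "q/2 + p"] by simp
    ultimately show ?thesis by (simp only: mult.assoc)
  qed
  also have "\<dots> \<le> (\<bar>a - x\<bar> powr -s * \<bar>a\<bar> powr -q) * \<bar>b\<bar> powr -p * \<bar>c\<bar> powr -p"
    by (intro mult_mono order_refl r_a r_b r_c mult_nonneg_nonneg powr_ge_zero)
  also have "\<dots> \<le> (\<bar>a - x\<bar> powr -(s + q) + \<bar>a\<bar> powr -(s + q))
      * \<bar>b\<bar> powr -p * \<bar>c\<bar> powr -p"
    using assms by (intro mult_right_mono powr_neg_mult_le_powr_neg_add) auto
  finally show ?thesis by (simp only: r_def)
qed

lemma nn_integral_lborel_pair_mult:
  fixes f :: "'a::euclidean_space \<Rightarrow> ennreal" and g :: "'b::euclidean_space \<Rightarrow> ennreal"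
  assumes [measurable]: "f \<in> borel_measurable borel" "g \<in> borel_measurable borel"
  shows "(\<integral>\<^sup>+z. f (fst z) * g (snd z) \<partial>lborel)
    = (\<integral>\<^sup>+x. f x \<partial>lborel) * (\<integral>\<^sup>+y. g y \<partial>lborel)"
proof -
  have "(\<integral>\<^sup>+z. f (fst z) * g (snd z) \<partial>lborel)
      = (\<integral>\<^sup>+z. f (fst z) * g (snd z) \<partial>(lborel \<Otimes>\<^sub>M lborel))"
    by (simp add: lborel_prod)
  also have "\<dots> = (\<integral>\<^sup>+x. \<integral>\<^sup>+y. f x * g y \<partial>lborel \<partial>lborel)"
    by (subst lborel.nn_integral_fst[symmetric]) auto
  also have "\<dots> = (\<integral>\<^sup>+x. f x \<partial>lborel) * (\<integral>\<^sup>+y. g y \<partial>lborel)"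
    by (simp add: nn_integral_cmult nn_integral_multc)
  finally show ?thesis .
qed

lemma nn_integral_lborel_triple_mult:
  fixes f g h :: "real \<Rightarrow> ennreal"
  assumes [measurable]:
    "f \<in> borel_measurable borel" "g \<in> borel_measurable borel" "h \<in> borel_measurable borel"
  shows "(\<integral>\<^sup>+(a, b, c). f a * (g b * h c) \<partial>lborel)
    = (\<integral>\<^sup>+a. f a \<partial>lborel) * ((\<integral>\<^sup>+b. g b \<partial>lborel) * (\<integral>\<^sup>+c. h c \<partial>lborel))"
proof -
  have [measurable]: "(\<lambda>w::real \<times> real. g (fst w) * h (snd w)) \<in> borel_measurable borel"
    unfolding borel_prod[symmetric] by measurable
  show ?thesis
    unfolding case_prod_unfold
    by (simp add: nn_integral_lborel_pair_mult[of f "\<lambda>w. g (fst w) * h (snd w)"]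
        nn_integral_lborel_pair_mult)
qed

lemma nn_integral_powr_neg_atLeastAtMost_0:
  fixes g c :: real
  assumes "0 \<le> g" "g < 1" "0 \<le> c"
  shows "(\<integral>\<^sup>+t. indicator {0..c} t * ennreal (t powr -g) \<partial>lborel)
    = ennreal (c powr (1 - g) / (1 - g))"
proof -
  have "((\<lambda>t. t powr -g) has_integral (c powr (1 - g) / (1 - g))) {0..c}"
    using has_integral_powr_from_0[of "-g" c] assms by simp
  then have "((\<lambda>t. if t \<in> {0..c} then t powr -g else 0) has_integral (c powr (1 - g) / (1 - g))) UNIV"
    by (simp only: has_integral_restrict_UNIV)
  moreover have "(\<lambda>t. indicator {0..c} t * t powr -g) = (\<lambda>t. if t \<in> {0..c} then t powr -g else 0)"
    by (simp add: fun_eq_iff)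
  ultimately have "((\<lambda>t. indicator {0..c} t * t powr -g) has_integral (c powr (1 - g) / (1 - g))) UNIV"
    by (simp only:)
  then have "(\<integral>\<^sup>+t. ennreal (indicator {0..c} t * t powr -g) \<partial>lborel)
      = ennreal (c powr (1 - g) / (1 - g))"
    by (rule nn_integral_has_integral_lborel[rotated 2]) (auto simp: indicator_def)
  then show ?thesis
    by (simp add: ennreal_mult' ennreal_indicator)
qed

lemma nn_integral_abs_powr_neg_atLeastAtMost:
  fixes g c :: real
  assumes "0 \<le> g" "g < 1" "0 \<le> c"
  shows "(\<integral>\<^sup>+t. indicator {-c..c} t * ennreal (\<bar>t\<bar> powr -g) \<partial>lborel)
    \<le> 2 * ennreal (c powr (1 - g) / (1 - g))"
proof -
  define P where "P t = indicator {0..c} t * ennreal (t powr -g)" for t :: real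
  have [measurable]: "P \<in> borel_measurable borel" unfolding P_def by measurable
  have "(\<integral>\<^sup>+t. indicator {-c..c} t * ennreal (\<bar>t\<bar> powr -g) \<partial>lborel)
      \<le> (\<integral>\<^sup>+t. P t + P (-t) \<partial>lborel)"
    by (intro nn_integral_mono) (auto simp: P_def indicator_def)
  also have "\<dots> = (\<integral>\<^sup>+t. P t \<partial>lborel) + (\<integral>\<^sup>+t. P (-t) \<partial>lborel)"
    by (intro nn_integral_add) auto
  also have "(\<integral>\<^sup>+t. P (-t) \<partial>lborel) = (\<integral>\<^sup>+t. P t \<partial>lborel)"
    using nn_integral_real_affine[of P "-1" 0] by simp
  also have "(\<integral>\<^sup>+t. P t \<partial>lborel) = ennreal (c powr (1 - g) / (1 - g))"
    unfolding P_def using assms by (rule nn_integral_powr_neg_atLeastAtMost_0)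
  finally show ?thesis by (simp add: mult_2)
qed

text \<open>
  \<open>inv_abs_powr g t\<close> is \<open>|t| powr -g\<close> made infinite at the pole \<open>t = 0\<close>
  (where \<open>0 powr -g = 0\<close>), so that the pointwise domination of the kernel below holds
  everywhere rather than only almost everywhere.
\<close>
definition inv_abs_powr :: "real \<Rightarrow> real \<Rightarrow> ennreal" where
  "inv_abs_powr g t = (if t = 0 then \<infinity> else ennreal (\<bar>t\<bar> powr -g))"

lemma borel_measurable_inv_abs_powr [measurable]: "inv_abs_powr g \<in> borel_measurable borel"
  unfolding inv_abs_powr_def by measurable

lemma inv_abs_powr_nonzero [simp]: "inv_abs_powr g t \<noteq> 0"
  by (simp add: inv_abs_powr_def)

lemma nn_integral_inv_abs_powr_shift_le:
  fixes g c x :: real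
  assumes "0 \<le> g" "g < 1" "\<bar>x\<bar> \<le> c"
  shows "(\<integral>\<^sup>+u. indicator {-c..c} u * inv_abs_powr g (u - x) \<partial>lborel)
    \<le> 2 * ennreal ((2 * c) powr (1 - g) / (1 - g))"
proof -
  define h where "h u = indicator {-c..c} u * ennreal (\<bar>u - x\<bar> powr -g)" for u :: real
  have [measurable]: "h \<in> borel_measurable borel" unfolding h_def by measurable
  have "(\<integral>\<^sup>+u. indicator {-c..c} u * inv_abs_powr g (u - x) \<partial>lborel)
      = (\<integral>\<^sup>+u. h u \<partial>lborel)"
    by (intro nn_integral_cong_AE, use AE_lborel_singleton[of x] in eventually_elim)
       (auto simp: h_def inv_abs_powr_def)
  also have "\<dots> = (\<integral>\<^sup>+s. h (x + s) \<partial>lborel)"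
    using nn_integral_real_affine[of h 1 x] by simp
  also have "\<dots> \<le> (\<integral>\<^sup>+t. indicator {-(2 * c)..2 * c} t * ennreal (\<bar>t\<bar> powr -g) \<partial>lborel)"
    using assms by (intro nn_integral_mono) (auto simp: h_def indicator_def)
  also have "\<dots> \<le> 2 * ennreal ((2 * c) powr (1 - g) / (1 - g))"
    using assms by (intro nn_integral_abs_powr_neg_atLeastAtMost) auto
  finally show ?thesis .
qed

lemma ball_integrand_le_product:
  fixes a b c x s q p e :: real
  assumes "0 \<le> s" "0 \<le> q" "0 \<le> p" "e = q/2 + p"
  shows "indicator {(a, b, c). a\<^sup>2 + b\<^sup>2 + c\<^sup>2 < 1} (a, b, c)
      * ennreal (\<bar>a - x\<bar> powr -s / (a\<^sup>2 + b\<^sup>2 + c\<^sup>2) powr e)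
    \<le> indicator {-1..1} a * (inv_abs_powr (s + q) (a - x) + inv_abs_powr (s + q) a)
      * (indicator {-1..1} b * inv_abs_powr p b * (indicator {-1..1} c * inv_abs_powr p c))"
proof (cases "a\<^sup>2 + b\<^sup>2 + c\<^sup>2 < 1")
  case False
  then show ?thesis by simp
next
  case True
  then have "a\<^sup>2 < 1" "b\<^sup>2 < 1" "c\<^sup>2 < 1"
    using zero_le_power2[of a] zero_le_power2[of b] zero_le_power2[of c] by linarith+
  then have cube: "a \<in> {-1..1}" "b \<in> {-1..1}" "c \<in> {-1..1}"
    by (auto simp: abs_square_less_1)
  consider "a = x" | "a \<noteq> x" "a = 0 \<or> b = 0 \<or> c = 0" | "a \<noteq> x" "a \<noteq> 0" "b \<noteq> 0" "c \<noteq> 0"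
    by blast
  then show ?thesis
  proof cases
    case 1
    then show ?thesis by simp
  next
    case 2
    then have "inv_abs_powr (s + q) (a - x) + inv_abs_powr (s + q) a = \<infinity>
        \<or> inv_abs_powr p b = \<infinity> \<or> inv_abs_powr p c = \<infinity>"
      by (auto simp: inv_abs_powr_def)
    then show ?thesis
      using cube by (auto simp: ennreal_mult_eq_top_iff)
  next
    case 3
    have "\<bar>a - x\<bar> powr -s / (a\<^sup>2 + b\<^sup>2 + c\<^sup>2) powr e
      \<le> (\<bar>a - x\<bar> powr -(s + q) + \<bar>a\<bar> powr -(s + q)) * \<bar>b\<bar> powr -p * \<bar>c\<bar> powr -p"
      unfolding assms(4) using 3 assms by (intro powr_neg_div_sum_squares_le) auto
    then have "ennreal (\<bar>a - x\<bar> powr -s / (a\<^sup>2 + b\<^sup>2 + c\<^sup>2) powr e)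
      \<le> ennreal ((\<bar>a - x\<bar> powr -(s + q) + \<bar>a\<bar> powr -(s + q)) * \<bar>b\<bar> powr -p * \<bar>c\<bar> powr -p)"
      by (rule ennreal_leI)
    then show ?thesis
      using 3 cube True by (simp add: inv_abs_powr_def ennreal_mult'' mult.assoc flip: ennreal_plus)
  qed
qed

lemma nn_integral_ball_kernel_uniformly_bounded:
  fixes s q p e :: real
  assumes "0 \<le> s" "0 \<le> q" "0 \<le> p" "p < 1" "s + q < 1" "e = q/2 + p"
  shows "\<exists>B. \<forall>x. \<bar>x\<bar> \<le> 1 \<longrightarrow>
    (\<integral>\<^sup>+(a, b, c). indicator {(a, b, c). a\<^sup>2 + b\<^sup>2 + c\<^sup>2 < 1} (a, b, c)
        * ennreal (\<bar>a - x\<bar> powr -s / (a\<^sup>2 + b\<^sup>2 + c\<^sup>2) powr e) \<partial>lborel)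
      \<le> ennreal B"
proof -
  define K where "K g = 2 * ennreal (2 powr (1 - g) / (1 - g))" for g :: real
  have K: "(\<integral>\<^sup>+u. indicator {-1..1} u * inv_abs_powr g (u - x) \<partial>lborel) \<le> K g"
    if "0 \<le> g" "g < 1" "\<bar>x\<bar> \<le> 1" for g x :: real
    using nn_integral_inv_abs_powr_shift_le[of g x 1] that by (simp add: K_def)
  define G where "G b = indicator {-1..1} b * inv_abs_powr p b" for b :: real
  have [measurable]: "G \<in> borel_measurable borel"
    unfolding G_def by measurable
  have integral_G: "(\<integral>\<^sup>+b. G b \<partial>lborel) \<le> K p"
    using K[of p 0] assms by (simp add: G_def)
  define B where "B = (K (s + q) + K (s + q)) * (K p * K p)"
  have "B < \<infinity>"
    by (simp add: B_def K_def ennreal_mult_less_top)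
  have "(\<integral>\<^sup>+(a, b, c). indicator {(a, b, c). a\<^sup>2 + b\<^sup>2 + c\<^sup>2 < 1} (a, b, c)
        * ennreal (\<bar>a - x\<bar> powr -s / (a\<^sup>2 + b\<^sup>2 + c\<^sup>2) powr e) \<partial>lborel) \<le> B"
    (is "?I \<le> B") if x: "\<bar>x\<bar> \<le> 1" for x :: real
  proof -
    define F where "F a = indicator {-1..1} a * (inv_abs_powr (s + q) (a - x) + inv_abs_powr (s + q) a)"
      for a :: real
    have [measurable]: "F \<in> borel_measurable borel"
      unfolding F_def by measurable
    have integral_F: "(\<integral>\<^sup>+a. F a \<partial>lborel) \<le> K (s + q) + K (s + q)"
      using K[of "s + q" x] K[of "s + q" 0] assms x
      by (simp add: F_def distrib_left nn_integral_add add_mono)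
    have "?I \<le> (\<integral>\<^sup>+(a, b, c). F a * (G b * G c) \<partial>lborel)"
      using ball_integrand_le_product[OF assms(1-3,6)]
      unfolding F_def G_def by (intro nn_integral_mono) auto
    also have "\<dots> = (\<integral>\<^sup>+a. F a \<partial>lborel) * ((\<integral>\<^sup>+b. G b \<partial>lborel) * (\<integral>\<^sup>+c. G c \<partial>lborel))"
      by (rule nn_integral_lborel_triple_mult) measurable
    also have "\<dots> \<le> B"
      unfolding B_def using integral_F integral_G by (intro mult_mono) auto
    finally show ?thesis .
  qed
  with \<open>B < \<infinity>\<close> show ?thesis
    by (intro exI[of _ "enn2real B"]) auto
qed

theorem lemma3p2:
  fixes \<alpha> \<beta> :: real
  assumes "0 < \<alpha>" "\<alpha> \<le> 1" "0 \<le> \<beta>" "\<beta> < \<alpha> / 2"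
  shows "\<exists>A::real. \<forall>x1::real. \<bar>x1\<bar> \<le> 1 \<longrightarrow>
    nn_integral (lborel :: (real \<times> real \<times> real) measure)
      (\<lambda>(u1, u2, v2). indicator {(a, b, c). a\<^sup>2 + b\<^sup>2 + c\<^sup>2 < (1::real)} (u1, u2, v2) *
         ennreal (\<bar>u1 - x1\<bar> powr (-1 + \<alpha>) / (u1\<^sup>2 + u2\<^sup>2 + v2\<^sup>2) powr (1 + \<beta>)))
    \<le> ennreal A"
proof -
  define q where "q = \<alpha>/2 + \<beta>"
  define p where "p = 1 + \<beta> - q/2"
  have "0 \<le> 1 - \<alpha>" "0 \<le> q" "0 \<le> p" "p < 1" "1 - \<alpha> + q < 1" "1 + \<beta> = q/2 + p"
    using assms by (auto simp: q_def p_def)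
  from nn_integral_ball_kernel_uniformly_bounded[OF this] show ?thesis
    by simp
qed

end
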